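(* Let $r$ and $s$ be integers each of which is positive or odd. Then for every integer $n\ge0$ with $n\ne-(r+s)/2$ and all integers $\alpha,\beta$ with $0\le\alpha,\beta\le n$, $$\delta_{\alpha+\beta,n-1}+\sum_{\substack{\ell\ge\alpha,\ m\ge\beta\\ \ell+m=n}}b_r(\ell,\alpha)\,b_s(m,\beta)=\sum_{k=0}^n b_{r+s}(n,k)\Big(b_r(k-\beta,\alpha)+b_s(k-\alpha,\beta)\Big).$$
   Context: $\delta_{i,j}$ is the Kronecker delta and $B_j$ are the Bernoulli numbers, $\frac{t}{e^t-1}=\sum_j B_j\frac{t^j}{j!}$. For $q\in\mathbb{Z}$, integers $n\ge0$ with $n\ne -q/2$, and $0\le i\le n$, define $$b_q(n,i):=\begin{cases}\frac{2}{2n+q}\binom{2n+q}{2i+q}B_{2(n-i)}, & n\ge\max\{0,\lfloor -q/2\rfloor+1\},\\ \frac{2}{2i+q}\binom{-2i-q}{-2n-q}B_{2(n-i)}, & 0\le n\le\lfloor-(q+1)/2\rfloor,\end{cases}$$ with $\binom{N}{j}=0$ for $j<0$; and set $b_q(n,i):=0$ whenever $n<0$ or $i>n$. (The paper denotes $b_q(n,i)$ by ${n\brack i}_q$.) *)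

theory Defs
  imports "HOL-Computational_Algebra.Formal_Power_Series"
begin

definition bernoulli :: "nat \<Rightarrow> real" where
  "bernoulli j = fact j * fps_nth (fps_X div (fps_exp 1 - 1) :: real fps) j"

definition ibinom :: "int \<Rightarrow> int \<Rightarrow> real" where
  "ibinom N j = (if j < 0 then 0 else (of_int N :: real) gchoose (nat j))"

text \<open>The paper's coefficient b_q(n,i). Value 0 outside the range of definition
  (n < 0, i > n, i < 0, or 2n + q = 0, where it is undefined in the paper).\<close>
definition bq :: "int \<Rightarrow> int \<Rightarrow> int \<Rightarrow> real" where
  "bq q n i =
     (if n < 0 \<or> i < 0 \<or> i > n \<or> 2*n + q = 0 then 0
      else if n \<ge> max 0 ((- q) div 2 + 1) then
        2 / of_int (2*n + q) * ibinom (2*n + q) (2*i + q) * bernoulli (nat (2*(n - i)))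
      else if n \<le> (- (q + 1)) div 2 then
        2 / of_int (2*i + q) * ibinom (-2*i - q) (-2*n - q) * bernoulli (nat (2*(n - i)))
      else 0)"

end

(*
  Write e_m = B_m / m!. Both branches of the definition give
  b_q(i + t, i) = 2 e_2t (a + 1)_2t / (a + 2t) with a = 2i + q, which is 2 e_2t (a)_2t / a
  (rising factorials) since a is never a nonpositive even number when q is positive or odd.
  Clearing the denominators A = 2 alpha + r, B = 2 beta + s and 2n + r + s turns the claim into
  an identity between products (A)_k (B)_l weighted by e_2i e_2(d-i), d = n - alpha - beta.
  That identity is the image, under the linear functional x^a |-> (A)_a (B)_(M-a), of an
  identity between polynomials in x: by Vandermonde's convolution the functional sends
  x^m (1 + x)^n to (A)_m (B)_(M-m-n) (A+B+M-n)_n. The polynomial identity is the coefficient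
  of t^(2d+1) in coth(u + v) (coth u + coth v) = 1 + coth u coth v with u = xt/2, v = t/2,
  because (t/2) coth(t/2) = sum_m e_2m t^2m.
*)
theory Submission
  imports Defs "HOL-Computational_Algebra.Polynomial"
begin

unbundle fps_syntax

definition bernoulli_egf :: "real fps" where
  "bernoulli_egf = Abs_fps (\<lambda>m. bernoulli m / fact m)"

lemma bernoulli_egf_nth: "bernoulli_egf $ m = bernoulli m / fact m"
  by (simp add: bernoulli_egf_def)

lemma fps_exp_minus_1_nonzero:
  assumes "x \<noteq> 0"
  shows "fps_exp x - 1 \<noteq> (0 :: 'a::field_char_0 fps)"
proof
  assume "fps_exp x - 1 = 0"
  then have "(fps_exp x - 1) $ 1 = 0" by simp
  with assms show False by simp
qed

lemma bernoulli_egf_times_expm1: "bernoulli_egf * (fps_exp 1 - 1) = fps_X"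
proof -
  have "subdegree (fps_exp (1::real) - 1) = 1"
    by (rule subdegreeI) (auto simp: less_Suc_eq)
  then have "fps_exp 1 - 1 dvd (fps_X :: real fps)"
    using fps_dvd_iff[OF fps_exp_minus_1_nonzero[of "1::real"], of fps_X] by simp
  moreover have "bernoulli_egf = fps_X div (fps_exp 1 - 1)"
    by (rule fps_ext) (simp add: bernoulli_egf_nth bernoulli_def)
  ultimately show ?thesis by (metis dvd_div_mult_self)
qed

lemma bernoulli_egf_scaled_times_expm1:
  "(bernoulli_egf oo (fps_const x * fps_X)) * (fps_exp x - 1) = fps_const x * fps_X"
  using arg_cong[OF bernoulli_egf_times_expm1, of "\<lambda>f. f oo (fps_const x * fps_X)"]
  by (simp add: fps_compose_mult_distrib fps_compose_sub_distrib)

lemma bernoulli_egf_reflect: "bernoulli_egf oo (fps_const (-1) * fps_X) = bernoulli_egf + fps_X"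
proof -
  let ?e = "fps_exp (1::real)" and ?e' = "fps_exp (-1::real)"
  have inv: "?e * ?e' = 1"
    using fps_exp_add_mult[of "1::real" "-1"] by simp
  have "(bernoulli_egf + fps_X) * (?e' - 1) = - (bernoulli_egf * (?e - 1) + fps_X * (?e - 1)) * ?e'"
    by (simp add: algebra_simps inv)
  also have "\<dots> = - fps_X * (?e * ?e')"
    by (simp only: bernoulli_egf_times_expm1) (simp add: algebra_simps)
  also have "\<dots> = - fps_X"
    by (simp add: inv)
  also have "\<dots> = (bernoulli_egf oo (fps_const (-1) * fps_X)) * (?e' - 1)"
    using bernoulli_egf_scaled_times_expm1[of "-1"] by (simp flip: fps_const_neg)
  finally show ?thesis
    using fps_exp_minus_1_nonzero[of "-1::real"] by simp
qed

lemma bernoulli_egf_nth_odd: "odd m \<Longrightarrow> bernoulli_egf $ m = (if m = 1 then -1/2 else 0)"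
  using arg_cong[OF bernoulli_egf_reflect, of "\<lambda>f. f $ m"]
  by (auto simp: fps_X_nth split: if_splits)

text \<open>The series of \<open>(x t/2) coth (x t/2)\<close> in \<open>t\<close>.\<close>
definition xcoth_fps :: "real \<Rightarrow> real fps" where
  "xcoth_fps x = Abs_fps (\<lambda>m. if even m then x ^ m * bernoulli_egf $ m else 0)"

lemma xcoth_fps_eq: "xcoth_fps x = (bernoulli_egf oo (fps_const x * fps_X)) + fps_const (x/2) * fps_X"
  by (rule fps_ext) (auto simp: xcoth_fps_def fps_X_nth bernoulli_egf_nth_odd le_Suc_eq)

lemma xcoth_fps_times_expm1:
  "2 * xcoth_fps x * (fps_exp x - 1) = fps_const x * fps_X * (fps_exp x + 1)"
proof -
  have "2 * xcoth_fps x * (fps_exp x - 1)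
      = 2 * ((bernoulli_egf oo (fps_const x * fps_X)) * (fps_exp x - 1))
        + fps_const x * fps_X * (fps_exp x - 1)"
    by (simp add: xcoth_fps_eq algebra_simps numeral_fps_const)
  then show ?thesis
    unfolding bernoulli_egf_scaled_times_expm1 by (simp add: algebra_simps)
qed

text \<open>The addition formula \<open>coth (u + v) (coth u + coth v) = 1 + coth u coth v\<close> with
  denominators cleared, where \<open>p = e\<^sup>2\<^sup>u\<close>, \<open>q = e\<^sup>2\<^sup>v\<close> and \<open>C\<^sub>x, C\<^sub>1, C\<^sub>u\<close> stand for
  \<open>u coth u, v coth v, (u + v) coth (u + v)\<close> with \<open>u = xX/2\<close>, \<open>v = X/2\<close>.\<close>
lemma coth_addition_cleared:
  fixes Cx C1 Cu p q x X :: "'a::comm_ring_1"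
  assumes "2 * Cx * (p - 1) = x * X * (p + 1)" "2 * C1 * (q - 1) = X * (q + 1)"
    and "2 * Cu * (p * q - 1) = (x + 1) * X * (p * q + 1)"
  shows "(4 * (x + 1) * X * Cx * C1 + x * (x + 1) * X ^ 3 - 4 * Cu * (X * Cx + x * X * C1))
           * ((p - 1) * (q - 1) * (p * q - 1)) = 0"
proof -
  have "(4 * (x + 1) * X * Cx * C1 + x * (x + 1) * X ^ 3 - 4 * Cu * (X * Cx + x * X * C1))
           * ((p - 1) * (q - 1) * (p * q - 1))
      = (x + 1) * X * (2 * Cx * (p - 1)) * (2 * C1 * (q - 1)) * (p * q - 1)
        + x * (x + 1) * X ^ 3 * ((p - 1) * (q - 1) * (p * q - 1))
        - (2 * Cu * (p * q - 1)) * (X * (2 * Cx * (p - 1)) * (q - 1) + x * X * (2 * C1 * (q - 1)) * (p - 1))"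
    by (simp add: algebra_simps)
  also have "\<dots> = 0"
    unfolding assms by (simp add: algebra_simps power3_eq_cube)
  finally show ?thesis .
qed

lemma xcoth_fps_addition:
  assumes "x \<noteq> 0" "x \<noteq> -1"
  shows "4 * fps_const (x + 1) * fps_X * xcoth_fps x * xcoth_fps 1
           + fps_const (x * (x + 1)) * fps_X ^ 3
         = 4 * xcoth_fps (x + 1) * (fps_X * xcoth_fps x + fps_const x * fps_X * xcoth_fps 1)"
proof -
  let ?p = "fps_exp x" and ?q = "fps_exp (1::real)" and ?x = "fps_const x"
  have exp_add: "fps_exp (x + 1) = ?p * ?q"
    by (rule fps_exp_add_mult)
  have const_add: "fps_const (x + 1) = ?x + 1"
    by (metis fps_const_1_eq_1 fps_const_add)
  have cleared:
    "(4 * (?x + 1) * fps_X * xcoth_fps x * xcoth_fps 1 + ?x * (?x + 1) * fps_X ^ 3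
       - 4 * xcoth_fps (x + 1) * (fps_X * xcoth_fps x + ?x * fps_X * xcoth_fps 1))
       * ((?p - 1) * (?q - 1) * (?p * ?q - 1)) = 0"
    using xcoth_fps_times_expm1[of x] xcoth_fps_times_expm1[of 1] xcoth_fps_times_expm1[of "x + 1"]
    by (intro coth_addition_cleared) (simp_all only: exp_add const_add fps_const_1_eq_1 mult_1)
  have "(?p - 1) * (?q - 1) * (?p * ?q - 1) \<noteq> 0"
    using assms fps_exp_minus_1_nonzero[of x] fps_exp_minus_1_nonzero[of "1::real"]
      fps_exp_minus_1_nonzero[of "x + 1"]
    by (simp add: fps_exp_add_mult)
  with cleared have "4 * (?x + 1) * fps_X * xcoth_fps x * xcoth_fps 1 + ?x * (?x + 1) * fps_X ^ 3
      = 4 * xcoth_fps (x + 1) * (fps_X * xcoth_fps x + ?x * fps_X * xcoth_fps 1)"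
    by simp
  then show ?thesis
    by (simp only: const_add fps_const_mult[symmetric])
qed

lemma fps_mult_nth_even:
  fixes f g :: "'a::comm_semiring_1 fps"
  assumes "\<And>m. odd m \<Longrightarrow> f $ m = 0" "\<And>m. odd m \<Longrightarrow> g $ m = 0"
  shows "(f * g) $ (2 * d) = (\<Sum>i\<le>d. f $ (2 * i) * g $ (2 * (d - i)))"
proof -
  have "(f * g) $ (2 * d) = (\<Sum>i\<in>{0..2 * d}. f $ i * g $ (2 * d - i))"
    by (simp add: fps_mult_nth)
  also have "\<dots> = (\<Sum>i\<in>(\<lambda>i. 2 * i) ` {..d}. f $ i * g $ (2 * d - i))"
  proof (rule sum.mono_neutral_right)
    show "\<forall>i\<in>{0..2 * d} - (\<lambda>i. 2 * i) ` {..d}. f $ i * g $ (2 * d - i) = 0"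
    proof
      fix i
      assume i: "i \<in> {0..2 * d} - (\<lambda>i. 2 * i) ` {..d}"
      have "odd i"
      proof
        assume "even i"
        then obtain k where "i = 2 * k" ..
        with i show False by auto
      qed
      then show "f $ i * g $ (2 * d - i) = 0"
        by (simp add: assms)
    qed
  qed auto
  also have "\<dots> = (\<Sum>i\<le>d. f $ (2 * i) * g $ (2 * (d - i)))"
    by (simp add: sum.reindex inj_on_def right_diff_distrib')
  finally show ?thesis .
qed

definition bernoulli_weight :: "nat \<Rightarrow> nat \<Rightarrow> real" where
  "bernoulli_weight d i = bernoulli_egf $ (2 * i) * bernoulli_egf $ (2 * (d - i))"

lemma xcoth_fps_mult_nth:
  "(xcoth_fps x * xcoth_fps y) $ (2 * d)
     = (\<Sum>i\<le>d. x ^ (2 * i) * y ^ (2 * (d - i)) * bernoulli_weight d i)"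
  by (subst fps_mult_nth_even) (auto simp: xcoth_fps_def bernoulli_weight_def mult_ac)

lemma xcoth_coeff_identity:
  fixes x :: real
  assumes "x \<noteq> 0" "x \<noteq> -1"
  shows "(x + 1) * (\<Sum>i\<le>d. 4 * bernoulli_weight d i * x ^ (2 * i)) + (if d = 1 then 1 else 0) * ((x + 1) * x)
       = (\<Sum>i\<le>d. 4 * bernoulli_weight d i * ((x + 1) ^ (2 * i) * (x ^ (2 * (d - i)) + x)))"
proof -
  let ?C = xcoth_fps
  have "fps_X * (4 * fps_const (x + 1) * (?C x * ?C 1) + fps_const (x * (x + 1)) * fps_X ^ 2)
      = fps_X * (4 * (?C (x + 1) * ?C x) + 4 * fps_const x * (?C (x + 1) * ?C 1))"
    using xcoth_fps_addition[OF assms]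
    by (simp add: algebra_simps power2_eq_square power3_eq_cube)
  from arg_cong[OF this, of "\<lambda>f. f $ Suc (2 * d)"]
  have "4 * (x + 1) * (?C x * ?C 1) $ (2 * d) + x * (x + 1) * (fps_X ^ 2 :: real fps) $ (2 * d)
      = 4 * (?C (x + 1) * ?C x) $ (2 * d) + 4 * x * (?C (x + 1) * ?C 1) $ (2 * d)"
    by (simp add: numeral_fps_const)
  then show ?thesis
    unfolding xcoth_fps_mult_nth fps_X_power_iff
    by (simp add: sum_distrib_left sum.distrib algebra_simps split del: if_split)
qed

lemma poly_eqI_cofinite:
  fixes p q :: "'a::{idom,ring_char_0} poly"
  assumes "finite S" and "\<And>x. x \<notin> S \<Longrightarrow> poly p x = poly q x"
  shows "p = q"
proof (rule ccontr)
  assume "p \<noteq> q"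
  then have "finite {x. poly (p - q) x = 0}"
    by (intro poly_roots_finite) simp
  moreover have "UNIV \<subseteq> S \<union> {x. poly (p - q) x = 0}"
    using assms(2) by auto
  ultimately have "finite (UNIV :: 'a set)"
    using assms(1) by (meson finite_Un finite_subset)
  then show False
    by (simp add: infinite_UNIV_char_0)
qed

lemma xcoth_poly_identity:
  "(\<Sum>i\<le>d. smult (4 * bernoulli_weight d i) ([:1, 1:] * monom 1 (2 * i)))
     + smult (if d = 1 then 1 else 0) ([:1, 1:] * monom 1 1)
   = (\<Sum>i\<le>d. smult (4 * bernoulli_weight d i)
        ([:1, 1:] ^ (2 * i) * monom 1 (2 * (d - i)) + [:1, 1:] ^ (2 * i) * monom 1 1))"
  by (rule poly_eqI_cofinite[of "{0, -1}"])
    (use xcoth_coeff_identity in \<open>auto simp: poly_sum poly_monom sum_distrib_left algebra_simps\<close>)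

definition pochhammer_functional :: "'a::comm_semiring_1 \<Rightarrow> 'a \<Rightarrow> nat \<Rightarrow> 'a poly \<Rightarrow> 'a" where
  "pochhammer_functional A B M p = (\<Sum>a\<le>M. coeff p a * (pochhammer A a * pochhammer B (M - a)))"

lemma pochhammer_functional_add:
  "pochhammer_functional A B M (p + q) = pochhammer_functional A B M p + pochhammer_functional A B M q"
  by (simp add: pochhammer_functional_def algebra_simps sum.distrib)

lemma pochhammer_functional_smult:
  "pochhammer_functional A B M (smult c p) = c * pochhammer_functional A B M p"
  by (simp add: pochhammer_functional_def sum_distrib_left mult_ac)

lemma pochhammer_functional_sum:
  "pochhammer_functional A B M (\<Sum>i\<in>I. p i) = (\<Sum>i\<in>I. pochhammer_functional A B M (p i))"
  by (simp add: pochhammer_functional_def coeff_sum sum_distrib_right sum.swap[of _ I])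

lemma coeff_one_plus_X_power: "coeff ([:1, 1:] ^ n) k = (of_nat (n choose k) :: 'a::comm_semiring_1)"
proof (cases "k \<le> n")
  case True
  then show ?thesis
    by (simp add: coeff_linear_poly_power)
next
  case False
  then have "coeff ([:1, 1:] ^ n :: 'a poly) k = 0"
    by (intro coeff_eq_0 le_less_trans[OF degree_power_le]) simp
  with False show ?thesis
    by (simp add: binomial_eq_0)
qed

lemma coeff_one_plus_X_power_monom:
  "coeff ([:1, 1:] ^ n * monom 1 m) a = (if a < m then 0 else (of_nat (n choose (a - m)) :: 'a::comm_semiring_1))"
  by (simp add: mult.commute[of _ "monom 1 m"] coeff_monom_mult) (simp add: coeff_one_plus_X_power)

text \<open>Vandermonde's convolution for rising factorials, \<open>(A + B)\<^sub>n = \<Sum> (n choose k) (A)\<^sub>k (B)\<^sub>n\<^sub>-\<^sub>k\<close>,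
  makes the functional multiplicative on the basis \<open>x\<^sup>m (1 + x)\<^sup>n\<close>.\<close>
lemma pochhammer_functional_binomial_monom:
  fixes A B :: "'a::comm_ring_1"
  assumes "m + n \<le> M"
  shows "pochhammer_functional A B M ([:1, 1:] ^ n * monom 1 m)
       = pochhammer A m * pochhammer B (M - m - n) * pochhammer (A + B + of_nat (M - n)) n"
proof -
  let ?f = "\<lambda>a. pochhammer A a * pochhammer B (M - a)"
  have "pochhammer_functional A B M ([:1, 1:] ^ n * monom 1 m)
      = (\<Sum>a\<le>M. (if a < m then 0 else of_nat (n choose (a - m))) * ?f a)"
    unfolding pochhammer_functional_def
    by (simp add: coeff_one_plus_X_power_monom)
  also have "\<dots> = (\<Sum>a\<in>{m..m + n}. of_nat (n choose (a - m)) * ?f a)"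
    using assms by (intro sum.mono_neutral_cong_right) (auto simp: binomial_eq_0)
  also have "\<dots> = (\<Sum>k\<le>n. of_nat (n choose k) * ?f (m + k))"
    by (simp add: sum.atLeastAtMost_shift_0 atLeast0AtMost)
  also have "\<dots> = pochhammer A m * pochhammer B (M - m - n)
      * (\<Sum>k\<le>n. of_nat (n choose k) * pochhammer (A + of_nat m) k
                   * pochhammer (B + of_nat (M - m - n)) (n - k))"
  proof -
    have "?f (m + k) = pochhammer A m * pochhammer B (M - m - n)
        * (pochhammer (A + of_nat m) k * pochhammer (B + of_nat (M - m - n)) (n - k))"
      if "k \<le> n" for k
    proof -
      have "M - (m + k) = (M - m - n) + (n - k)"
        using assms that by simp
      then show ?thesis
        by (simp add: pochhammer_product' mult_ac)
    qed
    then show ?thesis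
      by (simp add: sum_distrib_left mult_ac)
  qed
  also have "\<dots> = pochhammer A m * pochhammer B (M - m - n)
      * pochhammer (A + of_nat m + (B + of_nat (M - m - n))) n"
    by (simp only: pochhammer_binomial_sum)
  also have "A + of_nat m + (B + of_nat (M - m - n)) = A + B + of_nat (M - n)"
    using assms by (simp add: of_nat_diff)
  finally show ?thesis .
qed

lemma bernoulli_pochhammer_identity:
  fixes A B :: real
  shows "(A + B + of_nat (2 * d))
           * ((\<Sum>i\<le>d. 4 * bernoulli_weight d i * pochhammer A (2 * i) * pochhammer B (2 * (d - i)))
              + (if d = 1 then A * B else 0))
       = (\<Sum>i\<le>d. 4 * bernoulli_weight d i * pochhammer (A + B + of_nat (2 * (d - i)) + 1) (2 * i)
            * (B * pochhammer A (2 * (d - i)) + A * pochhammer B (2 * (d - i))))"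
proof -
  let ?L = "pochhammer_functional A B (2 * d + 1)"
  have lhs_term: "?L ([:1, 1:] * monom 1 m) = (A + B + of_nat (2 * d)) * (pochhammer A m * pochhammer B (2 * d - m))"
    if "m \<le> 2 * d" for m
    using pochhammer_functional_binomial_monom[of m 1 "2 * d + 1" A B] that
    by (simp add: algebra_simps)
  have rhs_term: "?L ([:1, 1:] ^ (2 * i) * monom 1 (2 * (d - i)) + [:1, 1:] ^ (2 * i) * monom 1 1)
      = pochhammer (A + B + of_nat (2 * (d - i)) + 1) (2 * i)
        * (B * pochhammer A (2 * (d - i)) + A * pochhammer B (2 * (d - i)))"
    if "i \<le> d" for i
  proof -
    have "2 * d + 1 - 2 * (d - i) - 2 * i = 1" "2 * d + 1 - 1 - 2 * i = 2 * (d - i)"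
      "2 * d + 1 - 2 * i = 2 * (d - i) + 1"
      using that by simp_all
    then show ?thesis
      using that pochhammer_functional_binomial_monom[of "2 * (d - i)" "2 * i" "2 * d + 1" A B]
        pochhammer_functional_binomial_monom[of 1 "2 * i" "2 * d + 1" A B]
      by (simp add: pochhammer_functional_add algebra_simps)
  qed
  have "(\<Sum>i\<le>d. 4 * bernoulli_weight d i * ?L ([:1, 1:] * monom 1 (2 * i)))
      + (if d = 1 then 1 else 0) * ?L ([:1, 1:] * monom 1 1)
      = (\<Sum>i\<le>d. 4 * bernoulli_weight d i
          * ?L ([:1, 1:] ^ (2 * i) * monom 1 (2 * (d - i)) + [:1, 1:] ^ (2 * i) * monom 1 1))"
    using arg_cong[OF xcoth_poly_identity, of ?L]
    by (simp only: pochhammer_functional_add pochhammer_functional_smult pochhammer_functional_sum)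
  moreover have "(\<Sum>i\<le>d. 4 * bernoulli_weight d i * ?L ([:1, 1:] * monom 1 (2 * i)))
      = (A + B + of_nat (2 * d))
        * (\<Sum>i\<le>d. 4 * bernoulli_weight d i * pochhammer A (2 * i) * pochhammer B (2 * (d - i)))"
    unfolding sum_distrib_left
  proof (intro sum.cong refl)
    fix i
    assume "i \<in> {..d}"
    then show "4 * bernoulli_weight d i * ?L ([:1, 1:] * monom 1 (2 * i))
        = (A + B + of_nat (2 * d)) * (4 * bernoulli_weight d i * pochhammer A (2 * i) * pochhammer B (2 * (d - i)))"
      using lhs_term[of "2 * i"] by (simp add: right_diff_distrib')
  qed
  moreover have "(if d = 1 then 1 else 0) * ?L ([:1, 1:] * monom 1 1)
      = (A + B + of_nat (2 * d)) * (if d = 1 then A * B else 0)"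
    using lhs_term[of 1] by (cases "d = 1") (simp_all add: numeral_3_eq_3)
  moreover have "(\<Sum>i\<le>d. 4 * bernoulli_weight d i
          * ?L ([:1, 1:] ^ (2 * i) * monom 1 (2 * (d - i)) + [:1, 1:] ^ (2 * i) * monom 1 1))
      = (\<Sum>i\<le>d. 4 * bernoulli_weight d i * pochhammer (A + B + of_nat (2 * (d - i)) + 1) (2 * i)
            * (B * pochhammer A (2 * (d - i)) + A * pochhammer B (2 * (d - i))))"
    by (intro sum.cong refl) (simp only: rhs_term atMost_iff mult.assoc)
  ultimately show ?thesis
    by (simp add: distrib_left)
qed

text \<open>\<open>b\<^sub>q(i + t, i)\<close> as a function of \<open>a = 2i + q\<close>; both branches of the definition of \<open>bq\<close> take this form.\<close>
definition bq_uniform :: "real \<Rightarrow> nat \<Rightarrow> real" where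
  "bq_uniform a t = 2 * bernoulli_egf $ (2 * t) * pochhammer (a + 1) (2 * t) / (a + of_nat (2 * t))"

lemma pochhammer_shift: "z * pochhammer (z + 1) k = pochhammer z k * (z + of_nat k)"
  using pochhammer_rec[of z k] pochhammer_Suc[of z k] by simp

lemma bq_uniform_eq:
  assumes "a \<noteq> 0" "a + of_nat (2 * t) \<noteq> 0"
  shows "bq_uniform a t = 2 * bernoulli_egf $ (2 * t) * pochhammer a (2 * t) / a"
proof -
  have "pochhammer (a + 1) (2 * t) / (a + of_nat (2 * t)) = pochhammer a (2 * t) / a"
    using pochhammer_shift[of a "2 * t"] assms by (simp add: field_simps)
  then show ?thesis
    unfolding bq_uniform_def times_divide_eq_right[symmetric] by (rule arg_cong)
qed

lemma ibinom_complement: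
  assumes "0 \<le> N"
  shows "ibinom N (N - int k) = pochhammer (of_int N - of_nat k + 1) k / fact k"
proof (cases "int k \<le> N")
  case True
  have "ibinom N (N - int k) = of_nat (nat N choose (nat N - k))"
    using True by (simp add: ibinom_def binomial_gbinomial nat_diff_distrib)
  also have "\<dots> = of_nat (nat N) gchoose k"
    using True by (simp add: binomial_symmetric[symmetric] binomial_gbinomial)
  finally show ?thesis
    using assms by (simp add: gbinomial_pochhammer')
next
  case False
  have "pochhammer (of_int N - of_nat k + 1 :: real) k = 0"
    unfolding pochhammer_eq_0_iff
  proof (intro exI conjI)
    show "nat (int k - N - 1) < k"
      using assms False by linarith
    show "(of_int N - of_nat k + 1 :: real) = - of_nat (nat (int k - N - 1))"
      using False by (simp add: of_nat_diff)
  qed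
  with False show ?thesis
    by (simp add: ibinom_def)
qed

lemma bq_pos_branch:
  assumes "0 \<le> i" "i \<le> n" "2 * n + q > 0"
  shows "bq q n i = 2 / of_int (2 * n + q) * ibinom (2 * n + q) (2 * i + q) * bernoulli (nat (2 * (n - i)))"
proof -
  have "n \<ge> max 0 ((- q) div 2 + 1)"
    using assms by presburger
  with assms show ?thesis
    by (simp add: bq_def)
qed

lemma bq_neg_branch:
  assumes "0 \<le> i" "i \<le> n" "2 * n + q < 0"
  shows "bq q n i = 2 / of_int (2 * i + q) * ibinom (- 2 * i - q) (- 2 * n - q) * bernoulli (nat (2 * (n - i)))"
proof -
  have "\<not> n \<ge> max 0 ((- q) div 2 + 1)" "n \<le> (- (q + 1)) div 2"
    using assms by presburger+
  with assms show ?thesis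
    by (simp add: bq_def)
qed

lemma bq_eq_bq_uniform:
  fixes q i :: int
  assumes "0 \<le> i" and nonzero: "2 * (i + int t) + q \<noteq> 0"
  shows "bq q (i + int t) i = bq_uniform (of_int (2 * i + q)) t"
proof -
  define N where "N = 2 * (i + int t) + q"
  have a: "2 * i + q = N - int (2 * t)"
    by (simp add: N_def)
  have bernoulli_2t: "bernoulli (nat (2 * (i + int t - i))) = fact (2 * t) * bernoulli_egf $ (2 * t)"
    by (simp add: bernoulli_egf_nth nat_mult_distrib)
  show ?thesis
  proof (cases "N > 0")
    case True
    then have "bq q (i + int t) i = 2 / of_int N * ibinom N (N - int (2 * t)) * (fact (2 * t) * bernoulli_egf $ (2 * t))"
      using assms bq_pos_branch[of i "i + int t" q] by (simp only: bernoulli_2t a N_def)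
    with True show ?thesis
      using ibinom_complement[of N "2 * t"] by (simp add: bq_uniform_def a)
  next
    case False
    then have neg: "N < 0"
      using nonzero N_def by simp
    then have "bq q (i + int t) i
        = 2 / of_int (N - int (2 * t)) * ibinom (- (N - int (2 * t))) (- N) * (fact (2 * t) * bernoulli_egf $ (2 * t))"
      using assms neg bq_neg_branch[of i "i + int t" q] by (simp only: bernoulli_2t a N_def) simp
    also have "\<dots> = 2 * bernoulli_egf $ (2 * t) * (pochhammer (1 - of_int N) (2 * t) / (of_int N - of_nat (2 * t)))"
    proof -
      have "ibinom (- (N - int (2 * t))) (- N) = pochhammer (1 - of_int N) (2 * t) / fact (2 * t)"
        using ibinom_complement[of "- (N - int (2 * t))" "2 * t"] neg by (simp add: algebra_simps)
      then show ?thesis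
        by (simp add: field_simps)
    qed
    also have "pochhammer (1 - of_int N) (2 * t) / (of_int N - of_nat (2 * t))
        = pochhammer (- of_int N) (2 * t) / (of_int N :: real)"
      using pochhammer_shift[of "- of_int N :: real" "2 * t"] neg a nonzero
      by (simp add: field_simps N_def)
    also have "pochhammer (- of_int N) (2 * t) = pochhammer (of_int N - of_nat (2 * t) + 1 :: real) (2 * t)"
      by (subst pochhammer_minus) simp
    finally show ?thesis
      by (simp add: bq_uniform_def a)
  qed
qed

lemma bq_uniform_convolution:
  fixes A B :: real
  assumes A: "\<And>i. A + of_nat (2 * i) \<noteq> 0" and B: "\<And>i. B + of_nat (2 * i) \<noteq> 0"
    and N: "A + B + of_nat (2 * d) \<noteq> 0"
  shows "(if d = 1 then 1 else 0) + (\<Sum>i\<le>d. bq_uniform A i * bq_uniform B (d - i))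
       = (\<Sum>j\<le>d. bq_uniform (A + B + of_nat (2 * j)) (d - j) * (bq_uniform A j + bq_uniform B j))"
proof -
  let ?e = "\<lambda>i. bernoulli_egf $ (2 * i)" and ?N = "A + B + of_nat (2 * d)"
  have A0: "A \<noteq> 0" and B0: "B \<noteq> 0"
    using A[of 0] B[of 0] by simp_all
  have bqA: "bq_uniform A i = 2 * ?e i * pochhammer A (2 * i) / A" for i
    using A0 A by (rule bq_uniform_eq)
  have bqB: "bq_uniform B i = 2 * ?e i * pochhammer B (2 * i) / B" for i
    using B0 B by (rule bq_uniform_eq)
  have lhs_term: "bq_uniform A i * bq_uniform B (d - i) * (A * B * ?N)
      = ?N * (4 * bernoulli_weight d i * pochhammer A (2 * i) * pochhammer B (2 * (d - i)))" for i
  proof -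
    have "(2 * x * a / A) * (2 * y * b / B) * (A * B * ?N) = ?N * (4 * (x * y) * a * b)" for x y a b
      using A0 B0 by (simp add: field_simps)
    then show ?thesis
      unfolding bqA bqB bernoulli_weight_def .
  qed
  have rhs_term: "bq_uniform (A + B + of_nat (2 * (d - i))) i * (bq_uniform A (d - i) + bq_uniform B (d - i))
        * (A * B * ?N)
      = 4 * bernoulli_weight d i * pochhammer (A + B + of_nat (2 * (d - i)) + 1) (2 * i)
        * (B * pochhammer A (2 * (d - i)) + A * pochhammer B (2 * (d - i)))" if "i \<le> d" for i
  proof -
    have "A + B + of_nat (2 * (d - i)) + of_nat (2 * i) = ?N"
      using that by (simp add: algebra_simps flip: of_nat_add)
    then have bq_sum: "bq_uniform (A + B + of_nat (2 * (d - i))) i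
        = 2 * ?e i * pochhammer (A + B + of_nat (2 * (d - i)) + 1) (2 * i) / ?N"
      by (simp add: bq_uniform_def)
    have "M \<noteq> 0 \<Longrightarrow> (2 * x * p / M) * (2 * y * a / A + 2 * y * b / B) * (A * B * M)
        = 4 * (x * y) * p * (B * a + A * b)" for M x y p a b
      using A0 B0 by (simp add: field_simps)
    then show ?thesis
      unfolding bq_sum bqA bqB bernoulli_weight_def using N by blast
  qed
  have "((if d = 1 then 1 else 0) + (\<Sum>i\<le>d. bq_uniform A i * bq_uniform B (d - i))) * (A * B * ?N)
      = ?N * ((\<Sum>i\<le>d. 4 * bernoulli_weight d i * pochhammer A (2 * i) * pochhammer B (2 * (d - i)))
              + (if d = 1 then A * B else 0))"
  proof -
    have "((if d = 1 then 1 else 0) + (\<Sum>i\<le>d. bq_uniform A i * bq_uniform B (d - i))) * (A * B * ?N)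
        = (if d = 1 then 1 else 0) * (A * B * ?N)
          + (\<Sum>i\<le>d. ?N * (4 * bernoulli_weight d i * pochhammer A (2 * i) * pochhammer B (2 * (d - i))))"
      by (simp only: distrib_right sum_distrib_right lhs_term)
    then show ?thesis
      by (simp add: sum_distrib_left distrib_left ac_simps)
  qed
  also have "\<dots> = (\<Sum>i\<le>d. 4 * bernoulli_weight d i * pochhammer (A + B + of_nat (2 * (d - i)) + 1) (2 * i)
            * (B * pochhammer A (2 * (d - i)) + A * pochhammer B (2 * (d - i))))"
    by (rule bernoulli_pochhammer_identity)
  also have "\<dots> = (\<Sum>i\<le>d. bq_uniform (A + B + of_nat (2 * (d - i))) i
            * (bq_uniform A (d - i) + bq_uniform B (d - i))) * (A * B * ?N)"
    unfolding sum_distrib_right by (intro sum.cong refl) (simp only: rhs_term atMost_iff)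
  also have "\<dots> = (\<Sum>j\<le>d. bq_uniform (A + B + of_nat (2 * j)) (d - j) * (bq_uniform A j + bq_uniform B j))
            * (A * B * ?N)"
    using sum.atLeastAtMost_rev[of "\<lambda>j. bq_uniform (A + B + of_nat (2 * j)) (d - j) * (bq_uniform A j + bq_uniform B j)" 0 d]
    by (simp add: atLeast0AtMost)
  finally show ?thesis
    using A0 B0 N by simp
qed

lemma bq_eq_0_if_less: "n < i \<Longrightarrow> bq q n i = 0"
  by (simp add: bq_def)

lemma bq_eq_bq_uniform_if_pos_or_odd:
  fixes q i :: int
  assumes "q > 0 \<or> odd q" "0 \<le> i"
  shows "bq q (i + int t) i = bq_uniform (of_int (2 * i + q)) t"
proof (rule bq_eq_bq_uniform)
  show "2 * (i + int t) + q \<noteq> 0"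
    using assms by presburger
qed (use assms in simp)

lemma sum_atLeastAtMost_int_shift:
  fixes a :: int
  shows "(\<Sum>l\<in>{a..a + int d}. f l) = (\<Sum>i\<le>d. f (a + int i))"
  by (rule sum.reindex_bij_witness[of _ "\<lambda>i. a + int i" "\<lambda>l. nat (l - a)"]) auto

lemma bq_convolution_lhs:
  fixes r s \<alpha> \<beta> :: int
  assumes "r > 0 \<or> odd r" "s > 0 \<or> odd s" "0 \<le> \<alpha>" "0 \<le> \<beta>"
  shows "(\<Sum>l\<in>{\<alpha>..\<alpha> + int d}. bq r l \<alpha> * bq s (\<alpha> + \<beta> + int d - l) \<beta>)
       = (\<Sum>i\<le>d. bq_uniform (of_int (2 * \<alpha> + r)) i * bq_uniform (of_int (2 * \<beta> + s)) (d - i))"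
  unfolding sum_atLeastAtMost_int_shift
proof (intro sum.cong refl)
  fix i
  assume "i \<in> {..d}"
  then have "\<alpha> + \<beta> + int d - (\<alpha> + int i) = \<beta> + int (d - i)"
    by simp
  then show "bq r (\<alpha> + int i) \<alpha> * bq s (\<alpha> + \<beta> + int d - (\<alpha> + int i)) \<beta>
      = bq_uniform (of_int (2 * \<alpha> + r)) i * bq_uniform (of_int (2 * \<beta> + s)) (d - i)"
    using bq_eq_bq_uniform_if_pos_or_odd[OF assms(1,3), of i] bq_eq_bq_uniform_if_pos_or_odd[OF assms(2,4), of "d - i"]
    by (simp only:)
qed

lemma bq_convolution_rhs:
  fixes r s \<alpha> \<beta> :: int
  assumes "r > 0 \<or> odd r" "s > 0 \<or> odd s" "0 \<le> \<alpha>" "0 \<le> \<beta>"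
    and "2 * (\<alpha> + \<beta> + int d) + (r + s) \<noteq> 0"
  shows "(\<Sum>k\<in>{0..\<alpha> + \<beta> + int d}. bq (r + s) (\<alpha> + \<beta> + int d) k * (bq r (k - \<beta>) \<alpha> + bq s (k - \<alpha>) \<beta>))
       = (\<Sum>j\<le>d. bq_uniform (of_int (2 * \<alpha> + r) + of_int (2 * \<beta> + s) + of_nat (2 * j)) (d - j)
            * (bq_uniform (of_int (2 * \<alpha> + r)) j + bq_uniform (of_int (2 * \<beta> + s)) j))"
proof -
  let ?g = "\<lambda>k. bq (r + s) (\<alpha> + \<beta> + int d) k * (bq r (k - \<beta>) \<alpha> + bq s (k - \<alpha>) \<beta>)"
  have "(\<Sum>k\<in>{0..\<alpha> + \<beta> + int d}. ?g k) = (\<Sum>k\<in>{\<alpha> + \<beta>..\<alpha> + \<beta> + int d}. ?g k)"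
  proof (rule sum.mono_neutral_right)
    show "\<forall>k\<in>{0..\<alpha> + \<beta> + int d} - {\<alpha> + \<beta>..\<alpha> + \<beta> + int d}. ?g k = 0"
      by (auto simp: bq_eq_0_if_less)
  qed (use assms in auto)
  also have "\<dots> = (\<Sum>j\<le>d. ?g (\<alpha> + \<beta> + int j))"
    by (rule sum_atLeastAtMost_int_shift)
  also have "\<dots> = (\<Sum>j\<le>d. bq_uniform (of_int (2 * \<alpha> + r) + of_int (2 * \<beta> + s) + of_nat (2 * j)) (d - j)
            * (bq_uniform (of_int (2 * \<alpha> + r)) j + bq_uniform (of_int (2 * \<beta> + s)) j))"
  proof (intro sum.cong refl)
    fix j
    assume "j \<in> {..d}"
    then have split: "\<alpha> + \<beta> + int d = (\<alpha> + \<beta> + int j) + int (d - j)"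
      by simp
    have "bq (r + s) (\<alpha> + \<beta> + int d) (\<alpha> + \<beta> + int j)
        = bq_uniform (of_int (2 * (\<alpha> + \<beta> + int j) + (r + s))) (d - j)"
      unfolding split
    proof (rule bq_eq_bq_uniform)
      show "2 * (\<alpha> + \<beta> + int j + int (d - j)) + (r + s) \<noteq> 0"
        using assms(5) by (simp only: split[symmetric] not_False_eq_True)
    qed (use assms in simp)
    also have "(of_int (2 * (\<alpha> + \<beta> + int j) + (r + s)) :: real)
        = of_int (2 * \<alpha> + r) + of_int (2 * \<beta> + s) + of_nat (2 * j)"
      by simp
    finally have "bq (r + s) (\<alpha> + \<beta> + int d) (\<alpha> + \<beta> + int j)
        = bq_uniform (of_int (2 * \<alpha> + r) + of_int (2 * \<beta> + s) + of_nat (2 * j)) (d - j)" .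
    moreover have "\<alpha> + \<beta> + int j - \<beta> = \<alpha> + int j" "\<alpha> + \<beta> + int j - \<alpha> = \<beta> + int j"
      by simp_all
    ultimately show "?g (\<alpha> + \<beta> + int j)
        = bq_uniform (of_int (2 * \<alpha> + r) + of_int (2 * \<beta> + s) + of_nat (2 * j)) (d - j)
            * (bq_uniform (of_int (2 * \<alpha> + r)) j + bq_uniform (of_int (2 * \<beta> + s)) j)"
      using bq_eq_bq_uniform_if_pos_or_odd[OF assms(1,3), of j] bq_eq_bq_uniform_if_pos_or_odd[OF assms(2,4), of j]
      by (simp only:)
  qed
  finally show ?thesis .
qed

lemma of_int_pos_or_odd_plus_even_nonzero:
  fixes q \<alpha> :: int
  assumes "q > 0 \<or> odd q" "0 \<le> \<alpha>"
  shows "of_int (2 * \<alpha> + q) + of_nat (2 * i) \<noteq> (0 :: real)"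
proof -
  have "2 * (\<alpha> + int i) + q \<noteq> 0"
    using assms by presburger
  then have "(of_int (2 * (\<alpha> + int i) + q) :: real) \<noteq> 0"
    by simp
  then show ?thesis
    by simp
qed

theorem theorem6p2:
  fixes r s n \<alpha> \<beta> :: int
  assumes "r > 0 \<or> odd r" and "s > 0 \<or> odd s"
    and "n \<ge> 0" and "2*n \<noteq> -(r + s)"
    and "0 \<le> \<alpha>" and "\<alpha> \<le> n" and "0 \<le> \<beta>" and "\<beta> \<le> n"
  shows "(if \<alpha> + \<beta> = n - 1 then 1 else 0)
           + (\<Sum>l\<in>{\<alpha>..n - \<beta>}. bq r l \<alpha> * bq s (n - l) \<beta>)
         = (\<Sum>k\<in>{0..n}. bq (r + s) n k * (bq r (k - \<beta>) \<alpha> + bq s (k - \<alpha>) \<beta>))"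
proof (cases "\<alpha> + \<beta> \<le> n")
  case False
  then show ?thesis
    by (simp add: bq_eq_0_if_less)
next
  case True
  define d where "d = nat (n - \<alpha> - \<beta>)"
  have n: "n = \<alpha> + \<beta> + int d"
    using True by (simp add: d_def)
  have "of_int (2 * \<alpha> + r) + of_int (2 * \<beta> + s) + of_nat (2 * d) = (of_int (2 * n + (r + s)) :: real)"
    by (simp add: n)
  then have "of_int (2 * \<alpha> + r) + of_int (2 * \<beta> + s) + of_nat (2 * d) \<noteq> (0 :: real)"
    using assms(4) by simp
  then show ?thesis
    using bq_uniform_convolution[OF of_int_pos_or_odd_plus_even_nonzero[OF assms(1,5)]
        of_int_pos_or_odd_plus_even_nonzero[OF assms(2,7)]]
    unfolding n using assms
    by (simp add: bq_convolution_lhs bq_convolution_rhs)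
qed

end
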